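(* Let $\lambda,\mu$ be integral partitions such that $\lambda$ stably embeds into $\mu$. Then $\|\lambda\|_p\le\|\mu\|_p$ for all $p\in[1,\infty]$ (equivalently, by Kuperberg's characterization, $\lambda$ bulk-embeds into $\mu$).
   Context: An integral partition is a finite nonincreasing sequence of positive integers. For $p\in[1,\infty)$, $\|\lambda\|_p=(\sum_i\lambda_i^p)^{1/p}$ and $\|\lambda\|_\infty=\max_i\lambda_i$. The product $\lambda\times\nu$ is the partition of all products $\lambda_i\nu_j$, reordered nonincreasingly. $\lambda=[\lambda_1,\ldots,\lambda_m]$ embeds into $\mu=[\mu_1,\ldots,\mu_n]$ if there is a map $\varphi:\{1,\ldots,m\}\to\{1,\ldots,n\}$ with $\sum_{i\in\varphi^{-1}(j)}\lambda_i\le\mu_j$ for all $j$. $\lambda$ stably embeds into $\mu$ if there is an integral partition $\nu$ such that $\lambda\times\nu$ embeds into $\mu\times\nu$. $\lambda$ bulk-embeds into $\mu$ if for every rational $\epsilon>0$ there exists $N$ with $\lambda^{\times N}$ embedding into $\mu^{\times N(1+\epsilon)}$; Kuperberg showed this holds iff $\|\lambda\|_p\le\|\mu\|_p$ for all $p\in[1,\infty]$. *)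

theory Defs
  imports Complex_Main
begin

definition is_partition :: "nat list \<Rightarrow> bool" where
  "is_partition l \<longleftrightarrow> sorted_wrt (\<lambda>a b. b \<le> a) l \<and> (\<forall>x\<in>set l. 0 < x)"

definition partition_product :: "nat list \<Rightarrow> nat list \<Rightarrow> nat list" where
  "partition_product l v = rev (sort [a * b. a \<leftarrow> l, b \<leftarrow> v])"

definition embeds :: "nat list \<Rightarrow> nat list \<Rightarrow> bool" where
  "embeds l m \<longleftrightarrow> (\<exists>\<phi> :: nat \<Rightarrow> nat.
      (\<forall>i < length l. \<phi> i < length m) \<and>
      (\<forall>j < length m. (\<Sum>i\<in>{i. i < length l \<and> \<phi> i = j}. l ! i) \<le> m ! j))"

definition stably_embeds :: "nat list \<Rightarrow> nat list \<Rightarrow> bool" where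
  "stably_embeds l m \<longleftrightarrow> (\<exists>v. is_partition v \<and> v \<noteq> [] \<and>
      embeds (partition_product l v) (partition_product m v))"

definition pnorm :: "real \<Rightarrow> nat list \<Rightarrow> real" where
  "pnorm p l = (\<Sum>x\<leftarrow>l. real x powr p) powr (1 / p)"

definition infnorm :: "nat list \<Rightarrow> real" where
  "infnorm l = real (Max (insert 0 (set l)))"

end

theory Submission
  imports Defs "HOL-Library.Multiset"
begin

text \<open>For \<open>1 \<le> p < \<infinity>\<close> the map \<open>t \<mapsto> t\<^sup>p\<close> is monotone and superadditive, so merging
parts and then enlarging them, which is what an embedding does, can only increase the sum of
\<open>p\<close>-th powers. That sum is multiplicative under the product of partitions, so from
\<open>\<lambda> \<times> \<nu>\<close> embedding into \<open>\<mu> \<times> \<nu>\<close> the positive factor contributed by \<open>\<nu>\<close> cancels.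
For \<open>p = \<infinity>\<close> the same cancellation works with the largest part, which is also multiplicative
and cannot decrease under an embedding.\<close>

lemma add_powr_le_powr_add:
  fixes x y p :: real
  assumes "0 \<le> x" and "0 \<le> y" and "1 \<le> p"
  shows "x powr p + y powr p \<le> (x + y) powr p"
proof -
  have le: "t powr p \<le> t * (x + y) powr (p - 1)" if "0 \<le> t" "t \<le> x + y" for t
  proof -
    have "t powr p = t * t powr (p - 1)"
      using \<open>0 \<le> t\<close> by (simp add: powr_mult_base)
    also have "\<dots> \<le> t * (x + y) powr (p - 1)"
      using that \<open>1 \<le> p\<close> by (intro mult_left_mono powr_mono2) auto
    finally show ?thesis .
  qed
  have "x powr p + y powr p \<le> x * (x + y) powr (p - 1) + y * (x + y) powr (p - 1)"
    using le[of x] le[of y] assms by simp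
  also have "\<dots> = (x + y) powr p"
    using assms by (simp add: powr_mult_base flip: distrib_right)
  finally show ?thesis .
qed

lemma sum_superadditive_le:
  fixes f :: "'a::comm_monoid_add \<Rightarrow> 'b::ordered_comm_monoid_add"
  assumes f0: "0 \<le> f 0" and superadd: "\<And>x y. f x + f y \<le> f (x + y)"
  shows "(\<Sum>i\<in>S. f (g i)) \<le> f (\<Sum>i\<in>S. g i)"
proof (cases "finite S")
  case True
  then show ?thesis
  proof (induction S rule: finite_induct)
    case (insert i S)
    have "f (g i) + (\<Sum>i\<in>S. f (g i)) \<le> f (g i) + f (\<Sum>i\<in>S. g i)"
      using insert.IH by (rule add_left_mono)
    also have "\<dots> \<le> f (g i + (\<Sum>i\<in>S. g i))" by (rule superadd)
    finally show ?case using insert.hyps by simp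
  qed (simp add: f0)
qed (simp add: f0)

lemma embeds_sum_list_le:
  fixes f :: "nat \<Rightarrow> 'b::ordered_comm_monoid_add"
  assumes f0: "0 \<le> f 0" and superadd: "\<And>x y. f x + f y \<le> f (x + y)"
    and "mono f" and "embeds l m"
  shows "(\<Sum>x\<leftarrow>l. f x) \<le> (\<Sum>x\<leftarrow>m. f x)"
proof -
  obtain \<phi> where into: "\<forall>i < length l. \<phi> i < length m"
    and fits: "\<forall>j < length m. (\<Sum>i\<in>{i. i < length l \<and> \<phi> i = j}. l ! i) \<le> m ! j"
    using \<open>embeds l m\<close> unfolding embeds_def by blast
  let ?fibre = "\<lambda>j. {i. i \<in> {..<length l} \<and> \<phi> i = j}"
  have "(\<Sum>x\<leftarrow>l. f x) = (\<Sum>i<length l. f (l ! i))"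
    by (simp add: sum_list_sum_nth atLeast0LessThan)
  also have "\<dots> = (\<Sum>j<length m. \<Sum>i\<in>?fibre j. f (l ! i))"
    by (rule sum.group[symmetric]) (use into in auto)
  also have "\<dots> \<le> (\<Sum>j<length m. f (m ! j))"
  proof (rule sum_mono)
    fix j assume "j \<in> {..<length m}"
    have "(\<Sum>i\<in>?fibre j. f (l ! i)) \<le> f (\<Sum>i\<in>?fibre j. l ! i)"
      using f0 superadd by (rule sum_superadditive_le)
    also have "\<dots> \<le> f (m ! j)"
      using fits \<open>j \<in> {..<length m}\<close> \<open>mono f\<close> by (auto intro: monoD)
    finally show "(\<Sum>i\<in>?fibre j. f (l ! i)) \<le> f (m ! j)" .
  qed
  also have "\<dots> = (\<Sum>x\<leftarrow>m. f x)"
    by (simp add: sum_list_sum_nth atLeast0LessThan)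
  finally show ?thesis .
qed

lemma embeds_imp_le_member:
  assumes "embeds l m" and "x \<in> set l"
  obtains y where "y \<in> set m" and "x \<le> y"
proof -
  obtain \<phi> where into: "\<forall>i < length l. \<phi> i < length m"
    and fits: "\<forall>j < length m. (\<Sum>i\<in>{i. i < length l \<and> \<phi> i = j}. l ! i) \<le> m ! j"
    using \<open>embeds l m\<close> unfolding embeds_def by blast
  obtain i where i: "i < length l" "x = l ! i"
    using \<open>x \<in> set l\<close> by (auto simp: in_set_conv_nth)
  have "x \<le> (\<Sum>k\<in>{k. k < length l \<and> \<phi> k = \<phi> i}. l ! k)"
    unfolding i(2) by (rule member_le_sum) (use i in auto)
  also have "\<dots> \<le> m ! \<phi> i" using fits into i by auto
  finally show ?thesis using into i by (intro that[of "m ! \<phi> i"]) auto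
qed

lemma embeds_infnorm_le:
  assumes "embeds l m"
  shows "infnorm l \<le> infnorm m"
proof -
  have "x \<le> Max (insert 0 (set m))" if "x \<in> set l" for x
    using assms that by (rule embeds_imp_le_member) (auto intro: le_trans)
  then show ?thesis unfolding infnorm_def by simp
qed

lemma sum_list_partition_product:
  fixes f :: "nat \<Rightarrow> 'b::comm_monoid_add"
  shows "(\<Sum>x\<leftarrow>partition_product l v. f x) = (\<Sum>a\<leftarrow>l. \<Sum>b\<leftarrow>v. f (a * b))"
proof -
  have "(\<Sum>x\<leftarrow>partition_product l v. f x) = (\<Sum>x\<leftarrow>[a * b. a \<leftarrow> l, b \<leftarrow> v]. f x)"
    unfolding partition_product_def by (simp flip: sum_mset_sum_list)
  also have "\<dots> = (\<Sum>a\<leftarrow>l. \<Sum>b\<leftarrow>v. f (a * b))"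
    by (induction l) (simp_all add: comp_def)
  finally show ?thesis .
qed

lemma sum_list_powr_partition_product:
  "(\<Sum>x\<leftarrow>partition_product l v. real x powr p)
     = (\<Sum>a\<leftarrow>l. real a powr p) * (\<Sum>b\<leftarrow>v. real b powr p)"
  by (simp add: sum_list_partition_product powr_mult sum_list_const_mult sum_list_mult_const)

lemma infnorm_partition_product:
  "infnorm (partition_product l v) = infnorm l * infnorm v"
proof -
  let ?M = "\<lambda>A :: nat set. Max (insert 0 A)"
  have prod_set: "set (partition_product l v) = (\<lambda>(a, b). a * b) ` (set l \<times> set v)"
    unfolding partition_product_def by auto
  have "?M (set (partition_product l v)) \<le> ?M (set l) * ?M (set v)"
    unfolding prod_set by (auto intro: mult_le_mono)
  moreover have "?M (set l) * ?M (set v) \<le> ?M (set (partition_product l v))"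
  proof -
    have "?M (set l) \<in> insert 0 (set l)" "?M (set v) \<in> insert 0 (set v)"
      by (rule Max_in; simp)+
    then have "?M (set l) * ?M (set v) \<in> insert 0 (set (partition_product l v))"
      unfolding prod_set by auto
    then show ?thesis by simp
  qed
  ultimately have "?M (set (partition_product l v)) = ?M (set l) * ?M (set v)"
    by (rule antisym)
  then show ?thesis unfolding infnorm_def by simp
qed

lemma sum_list_powr_pos:
  assumes "is_partition v" and "v \<noteq> []"
  shows "0 < (\<Sum>b\<leftarrow>v. real b powr p)"
proof -
  obtain b vs where v: "v = b # vs" using \<open>v \<noteq> []\<close> by (cases v) auto
  then have "0 < b" using \<open>is_partition v\<close> unfolding is_partition_def by simp
  moreover have "0 \<le> (\<Sum>b\<leftarrow>vs. real b powr p)" by (intro sum_list_nonneg) auto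
  ultimately show ?thesis unfolding v by (simp add: add_pos_nonneg)
qed

lemma infnorm_pos:
  assumes "is_partition v" and "v \<noteq> []"
  shows "0 < infnorm v"
proof -
  have "hd v \<in> set v" "0 < hd v"
    using assms unfolding is_partition_def by simp_all
  then show ?thesis unfolding infnorm_def by (auto simp: Max_gr_iff)
qed

lemma stably_embeds_imp_pnorm_le:
  assumes "stably_embeds l m" and "1 \<le> p"
  shows "pnorm p l \<le> pnorm p m"
proof -
  obtain v where v: "is_partition v" "v \<noteq> []"
    and e: "embeds (partition_product l v) (partition_product m v)"
    using assms(1) unfolding stably_embeds_def by blast
  let ?S = "\<lambda>l. \<Sum>x\<leftarrow>l. real x powr p"
  have mono: "mono (\<lambda>x::nat. real x powr p)"
    by (rule monoI) (use \<open>1 \<le> p\<close> in \<open>auto intro: powr_mono2\<close>)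
  have "?S (partition_product l v) \<le> ?S (partition_product m v)"
    by (rule embeds_sum_list_le[OF _ _ mono e])
      (use \<open>1 \<le> p\<close> in \<open>simp_all add: add_powr_le_powr_add\<close>)
  then have "?S l * ?S v \<le> ?S m * ?S v"
    by (simp only: sum_list_powr_partition_product)
  then have "?S l \<le> ?S m"
    using sum_list_powr_pos[OF v] by simp
  then show ?thesis
    unfolding pnorm_def using \<open>1 \<le> p\<close> by (auto intro!: powr_mono2 sum_list_nonneg)
qed

lemma stably_embeds_imp_infnorm_le:
  assumes "stably_embeds l m"
  shows "infnorm l \<le> infnorm m"
proof -
  obtain v where v: "is_partition v" "v \<noteq> []"
    and e: "embeds (partition_product l v) (partition_product m v)"
    using assms unfolding stably_embeds_def by blast
  have "infnorm l * infnorm v \<le> infnorm m * infnorm v"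
    using embeds_infnorm_le[OF e] by (simp only: infnorm_partition_product)
  then show ?thesis
    using infnorm_pos[OF v] by simp
qed

theorem mainTheorem4:
  fixes lam mu :: "nat list"
  assumes "is_partition lam" and "is_partition mu"
    and "stably_embeds lam mu"
  shows "(\<forall>p::real. 1 \<le> p \<longrightarrow> pnorm p lam \<le> pnorm p mu) \<and> infnorm lam \<le> infnorm mu"
  using stably_embeds_imp_pnorm_le[OF assms(3)] stably_embeds_imp_infnorm_le[OF assms(3)] by blast

end
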